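(* Let $\mathcal{X}\subseteq\mathbb{R}^n$ be compact. Then $\mathcal{X}$ is standard comonotone if and only if its convex hull $\operatorname{conv}(\mathcal{X})$ is standard comonotone.
   Context: $\Pi_n$ is the set of permutations of $[n]$; for $\pi\in\Pi_n$, $\mathcal{Z}(\pi)=\{x\in\mathbb{R}^n: x_{\pi(1)}\ge\cdots\ge x_{\pi(n)}\}$. A set $\mathcal{X}\subseteq\mathbb{R}^n$ is standard comonotone if for every $\pi\in\Pi_n$ and every $v\in\mathcal{Z}(\pi)$, whenever $\max_{x\in\mathcal{X}}v^\top x$ attains its optimum, it has an optimal solution in $\mathcal{Z}(\pi)$. *)

theory Defs
  imports "HOL-Analysis.Analysis"
begin

text \<open>Coordinates of \<open>real ^ 'n\<close> are indexed by the finite type \<open>'n\<close>, n = CARD('n).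
  A permutation of [n] is a bijection \<open>\<pi>\<close> from positions \<open>{..<CARD('n)}\<close> onto the index type.\<close>

definition perm_idx :: "(nat \<Rightarrow> 'n::finite) \<Rightarrow> bool" where
  "perm_idx \<pi> \<longleftrightarrow> bij_betw \<pi> {..<CARD('n)} (UNIV :: 'n set)"

definition Zcone :: "(nat \<Rightarrow> 'n::finite) \<Rightarrow> (real ^ 'n) set" where
  "Zcone \<pi> = {x. \<forall>i j. i \<le> j \<and> j < CARD('n) \<longrightarrow> x $ \<pi> j \<le> x $ \<pi> i}"

definition is_optimal :: "(real ^ 'n) set \<Rightarrow> real ^ 'n \<Rightarrow> real ^ 'n \<Rightarrow> bool" where
  "is_optimal X v x \<longleftrightarrow> x \<in> X \<and> (\<forall>y\<in>X. v \<bullet> y \<le> v \<bullet> x)"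

definition standard_comonotone :: "(real ^ 'n::finite) set \<Rightarrow> bool" where
  "standard_comonotone X \<longleftrightarrow>
     (\<forall>\<pi> v. perm_idx \<pi> \<and> v \<in> Zcone \<pi> \<and> (\<exists>x. is_optimal X v x)
        \<longrightarrow> (\<exists>x \<in> Zcone \<pi>. is_optimal X v x))"

end

theory Submission
  imports Defs
begin

text \<open>An optimum over \<open>X\<close> is also an optimum over \<open>conv X\<close>, and a compact \<open>X\<close> always has one;
  this gives the forward direction. Conversely, let \<open>v \<in> Z(\<pi>)\<close> have optima over \<open>X\<close> but none
  in \<open>Z(\<pi>)\<close>. Choose \<open>q\<close> with \<open>X - q \<subseteq> Z(\<pi>)\<close> and let \<open>p\<close> be a point of \<open>X\<close> farthest from the
  centre \<open>c = q - t v\<close>. Then \<open>X\<close> lies in the ball around \<open>c\<close> through \<open>p\<close>, so \<open>p\<close> is the unique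
  maximiser over \<open>conv X\<close> of \<open>w = p - c = (p - q) + t v \<in> Z(\<pi>)\<close>. For large \<open>t\<close> the point \<open>p\<close>
  is almost \<open>v\<close>-optimal, which keeps it outside \<open>Z(\<pi>)\<close>; so \<open>conv X\<close> is not standard comonotone.\<close>

lemma is_optimal_convex_hull:
  assumes "is_optimal X v x"
  shows "is_optimal (convex hull X) v x"
proof -
  have "X \<subseteq> {y. v \<bullet> y \<le> v \<bullet> x}" using assms by (auto simp: is_optimal_def)
  then have "convex hull X \<subseteq> {y. v \<bullet> y \<le> v \<bullet> x}"
    by (intro hull_minimal) (auto simp: convex_halfspace_le)
  then show ?thesis using assms hull_inc[of x X] by (auto simp: is_optimal_def)
qed

lemma compact_has_optimal:
  assumes "compact X" "X \<noteq> {}"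
  shows "\<exists>x. is_optimal X v x"
proof -
  have "continuous_on X (\<lambda>y. v \<bullet> y)" by (intro continuous_intros)
  then show ?thesis
    using continuous_attains_sup[OF assms] by (auto simp: is_optimal_def)
qed

lemma closed_Zcone: "closed (Zcone \<pi>)"
  unfolding Zcone_def
proof (intro closed_Collect_all closed_Collect_imp closed_Collect_le continuous_intros)
  fix i j :: nat
  show "open {x :: real^'n. i \<le> j \<and> j < CARD('n)}"
    by (cases "i \<le> j \<and> j < CARD('n)") auto
qed

lemma Zcone_add: "x \<in> Zcone \<pi> \<Longrightarrow> y \<in> Zcone \<pi> \<Longrightarrow> x + y \<in> Zcone \<pi>"
  unfolding Zcone_def by (auto intro: add_mono)

lemma Zcone_scaleR: "x \<in> Zcone \<pi> \<Longrightarrow> 0 \<le> t \<Longrightarrow> t *\<^sub>R x \<in> Zcone \<pi>"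
  unfolding Zcone_def by (auto intro: mult_left_mono)

lemma bounded_translate_into_Zcone:
  fixes X :: "(real ^ 'n) set"
  assumes "perm_idx \<pi>" "bounded X"
  obtains q where "\<And>y. y \<in> X \<Longrightarrow> y - q \<in> Zcone \<pi>"
proof -
  obtain B where B: "B > 0" "\<forall>y\<in>X. norm y \<le> B"
    using assms(2) bounded_pos by blast
  define \<rho> where "\<rho> = inv_into {..<CARD('n)} \<pi>"
  have "inj_on \<pi> {..<CARD('n)}"
    using assms(1) unfolding perm_idx_def by (rule bij_betw_imp_inj_on)
  then have \<rho>: "\<rho> (\<pi> i) = i" if "i < CARD('n)" for i
    unfolding \<rho>_def using that by simp
  define q :: "real^'n" where "q = (\<chi> k. 2 * B * real (\<rho> k))"
  have "y - q \<in> Zcone \<pi>" if "y \<in> X" for y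
    unfolding Zcone_def
  proof (intro CollectI allI impI)
    fix i j assume ij: "i \<le> j \<and> j < CARD('n)"
    have q: "q $ \<pi> i = 2 * B * real i" "q $ \<pi> j = 2 * B * real j"
      using \<rho> ij by (auto simp: q_def)
    have "\<bar>y $ \<pi> i\<bar> \<le> B" "\<bar>y $ \<pi> j\<bar> \<le> B"
      using component_le_norm_cart[of y] B that by (meson order_trans)+
    moreover have "i = j \<or> 2 * B * (real i + 1) \<le> 2 * B * real j"
      using ij B by (auto intro!: mult_left_mono)
    ultimately show "(y - q) $ \<pi> j \<le> (y - q) $ \<pi> i"
      using q by (auto simp: algebra_simps abs_le_iff)
  qed
  then show ?thesis using that by blast
qed

lemma optimal_value_gap:
  assumes "compact X" "closed C" "is_optimal X v x0" "\<not> (\<exists>x\<in>C. is_optimal X v x)"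
  obtains M where "M < v \<bullet> x0" "\<And>y. y \<in> X \<inter> C \<Longrightarrow> v \<bullet> y \<le> M"
proof (cases "X \<inter> C = {}")
  case True
  then show ?thesis using that[of "v \<bullet> x0 - 1"] by auto
next
  case False
  obtain y where y: "is_optimal (X \<inter> C) v y"
    using compact_has_optimal[OF compact_Int_closed[OF assms(1,2)] False] by blast
  have "\<not> is_optimal X v y" using y assms(4) by (auto simp: is_optimal_def)
  then have "v \<bullet> y < v \<bullet> x0" using y assms(3) by (force simp: is_optimal_def)
  then show ?thesis using that[of "v \<bullet> y"] y by (auto simp: is_optimal_def)
qed

lemma power2_norm_diff_split:
  fixes c p y :: "'a::real_inner"
  shows "norm (y - c)^2 = norm (y - p)^2 + 2 * ((p - c) \<bullet> (y - p)) + norm (p - c)^2"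
  using dot_norm[of "y - p" "p - c"] by (simp add: inner_commute)

lemma farthest_is_optimal:
  fixes X :: "(real ^ 'n) set"
  assumes "X \<subseteq> cball c (dist c p)" "p \<in> X"
  shows "is_optimal X (p - c) p"
  unfolding is_optimal_def
proof (intro conjI ballI)
  fix y assume "y \<in> X"
  then have "norm (y - c) \<le> norm (p - c)" using assms(1) by (auto simp: dist_norm norm_minus_commute)
  then have "norm (y - c)^2 \<le> norm (p - c)^2" by (simp add: power_mono)
  then have "(p - c) \<bullet> (y - p) \<le> 0"
    using power2_norm_diff_split[of y c p] zero_le_power2[of "norm (y - p)"] by linarith
  then show "(p - c) \<bullet> y \<le> (p - c) \<bullet> p" by (simp add: inner_diff_right)
qed (fact assms(2))

lemma farthest_unique_optimal:
  fixes S :: "(real ^ 'n) set"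
  assumes "S \<subseteq> cball c (dist c p)" "p \<in> S" "is_optimal S (p - c) z"
  shows "z = p"
proof -
  have "norm (z - c) \<le> norm (p - c)"
    using assms(1,3) by (auto simp: is_optimal_def dist_norm norm_minus_commute)
  then have "norm (z - c)^2 \<le> norm (p - c)^2" by (simp add: power_mono)
  moreover have "(p - c) \<bullet> p \<le> (p - c) \<bullet> z" using assms(2,3) by (auto simp: is_optimal_def)
  then have "0 \<le> (p - c) \<bullet> (z - p)" by (simp add: inner_diff_right)
  ultimately have "norm (z - p)^2 \<le> 0" using power2_norm_diff_split[of z c p] by linarith
  then show ?thesis by simp
qed

text \<open>Moving the centre \<open>q - t v\<close> far away in direction \<open>-v\<close> makes farthest points nearly
  \<open>v\<close>-optimal.\<close>

lemma inner_gap_of_farther: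
  fixes q v x p :: "'a::real_inner"
  assumes "dist (q - t *\<^sub>R v) x \<le> dist (q - t *\<^sub>R v) p"
  shows "2 * t * (v \<bullet> x - v \<bullet> p) \<le> norm (p - q)^2 - norm (x - q)^2"
proof -
  define c where "c = q - t *\<^sub>R v"
  have expand: "norm (y - c)^2 = norm (y - q)^2 + 2 * t * (v \<bullet> y) - 2 * t * (v \<bullet> q)
      + norm (t *\<^sub>R v)^2" for y :: 'a
    using power2_norm_diff_split[of y c q] by (simp add: c_def inner_diff_right algebra_simps)
  have "norm (x - c)^2 \<le> norm (p - c)^2"
    using assms by (simp add: c_def dist_norm norm_minus_commute power_mono)
  then have "2 * t * (v \<bullet> x) - 2 * t * (v \<bullet> p) \<le> norm (p - q)^2 - norm (x - q)^2"
    using expand[of x] expand[of p] by linarith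
  then show ?thesis by (simp add: right_diff_distrib)
qed

lemma standard_comonotone_convex_hull:
  assumes "compact X" "standard_comonotone X"
  shows "standard_comonotone (convex hull X)"
  unfolding standard_comonotone_def
proof (intro allI impI)
  fix \<pi> v assume H: "perm_idx \<pi> \<and> v \<in> Zcone \<pi> \<and> (\<exists>x. is_optimal (convex hull X) v x)"
  then have "X \<noteq> {}" by (auto simp: is_optimal_def)
  then obtain x0 where "is_optimal X v x0" using compact_has_optimal[OF assms(1)] by blast
  then obtain x where "x \<in> Zcone \<pi>" "is_optimal X v x"
    using assms(2) H unfolding standard_comonotone_def by blast
  then show "\<exists>x\<in>Zcone \<pi>. is_optimal (convex hull X) v x" using is_optimal_convex_hull by blast
qed

lemma exposed_point_beyond_level:
  fixes X :: "(real ^ 'n) set"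
  assumes X: "compact X" and "perm_idx \<pi>" "v \<in> Zcone \<pi>" "x0 \<in> X" "M < v \<bullet> x0"
  obtains p w where "p \<in> X" "M < v \<bullet> p" "w \<in> Zcone \<pi>" "is_optimal (convex hull X) w p"
    "\<And>z. is_optimal (convex hull X) w z \<Longrightarrow> z = p"
proof -
  obtain q where q: "\<And>y. y \<in> X \<Longrightarrow> y - q \<in> Zcone \<pi>"
    using bounded_translate_into_Zcone assms(2) compact_imp_bounded[OF X] by blast
  obtain xq where xq: "\<And>y. y \<in> X \<Longrightarrow> dist q y \<le> dist q xq"
    using distance_attains_sup[OF X, of q] assms(4) by blast
  define r where "r = norm (xq - q)^2"
  have r: "norm (y - q)^2 \<le> r" if "y \<in> X" for y
    using xq[OF that] by (simp add: r_def dist_norm norm_minus_commute power_mono)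
  define t where "t = r / (v \<bullet> x0 - M) + 1"
  have "t * (v \<bullet> x0 - M) = r + (v \<bullet> x0 - M)"
    using assms(5) by (simp add: t_def field_simps)
  moreover have "0 \<le> r" by (simp add: r_def)
  ultimately have t: "t > 0" "r < t * (v \<bullet> x0 - M)"
    using assms(5) by (auto simp: t_def add_nonneg_pos)
  define c where "c = q - t *\<^sub>R v"
  obtain p where p: "p \<in> X" "\<And>y. y \<in> X \<Longrightarrow> dist c y \<le> dist c p"
    using distance_attains_sup[OF X, of c] assms(4) by blast
  have "2 * t * (v \<bullet> x0 - v \<bullet> p) \<le> norm (p - q)^2 - norm (x0 - q)^2"
    using inner_gap_of_farther p(2)[OF assms(4)] unfolding c_def .
  also have "\<dots> \<le> r" using r[OF p(1)] zero_le_power2[of "norm (x0 - q)"] by linarith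
  finally have "t * (v \<bullet> x0 - v \<bullet> p) < t * (v \<bullet> x0 - M)"
    using t(2) \<open>0 \<le> r\<close> by (cases "0 \<le> t * (v \<bullet> x0 - v \<bullet> p)") auto
  then have "M < v \<bullet> p" using t(1) by simp
  have "p - c = (p - q) + t *\<^sub>R v" by (simp add: c_def)
  also have "\<dots> \<in> Zcone \<pi>"
    using Zcone_add[OF q[OF p(1)] Zcone_scaleR] assms(3) t(1) by simp
  finally have "p - c \<in> Zcone \<pi>" .
  have ball: "convex hull X \<subseteq> cball c (dist c p)"
    using p(2) by (intro hull_minimal) (auto simp: convex_cball)
  have "is_optimal (convex hull X) (p - c) p"
    by (intro is_optimal_convex_hull farthest_is_optimal p(1)) (auto intro: p(2))
  with \<open>M < v \<bullet> p\<close> \<open>p - c \<in> Zcone \<pi>\<close> show ?thesis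
    using that farthest_unique_optimal[OF ball hull_inc[OF p(1)]] p(1) by blast
qed

lemma standard_comonotone_of_convex_hull:
  fixes X :: "(real ^ 'n) set"
  assumes X: "compact X" and hull: "standard_comonotone (convex hull X)"
  shows "standard_comonotone X"
  unfolding standard_comonotone_def
proof (intro allI impI)
  fix \<pi> v assume H: "perm_idx \<pi> \<and> v \<in> Zcone \<pi> \<and> (\<exists>x. is_optimal X v x)"
  then obtain x0 where x0: "is_optimal X v x0" by blast
  show "\<exists>x\<in>Zcone \<pi>. is_optimal X v x"
  proof (rule ccontr)
    assume "\<not> ?thesis"
    then obtain M where M: "M < v \<bullet> x0" "\<And>y. y \<in> X \<inter> Zcone \<pi> \<Longrightarrow> v \<bullet> y \<le> M"
      using optimal_value_gap[OF X closed_Zcone x0] by blast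
    have "x0 \<in> X" using x0 by (simp add: is_optimal_def)
    with H obtain p w where p: "p \<in> X" "M < v \<bullet> p" and w: "w \<in> Zcone \<pi>"
      "is_optimal (convex hull X) w p" "\<And>z. is_optimal (convex hull X) w z \<Longrightarrow> z = p"
      using exposed_point_beyond_level[OF X _ _ _ M(1)] by blast
    obtain z where "z \<in> Zcone \<pi>" "is_optimal (convex hull X) w z"
      using hull H w(1,2) unfolding standard_comonotone_def by blast
    then have "p \<in> X \<inter> Zcone \<pi>" using w(3) p(1) by auto
    then show False using M(2) p(2) by force
  qed
qed

theorem proposition2:
  fixes X :: "(real ^ 'n) set"
  assumes "compact X"
  shows "standard_comonotone X \<longleftrightarrow> standard_comonotone (convex hull X)"
  using standard_comonotone_convex_hull[OF assms] standard_comonotone_of_convex_hull[OF assms]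
  by blast

end
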